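(* Let $I$ be a finite set. For each tree $T$ on $I$, the interval $[\hat{0},T]$ of the poset $\operatorname{For}(I)$ is a lattice.
   Context: A tree on a finite set $I$ is a (non-planar) rooted binary tree whose leaves are bijectively labeled by $I$: vertices are inner vertices (valence $3$) and leaves and the root (valence $1$), edges oriented towards the root; one-leaf trees are allowed. A forest on $I$ is a set of trees whose leaf sets partition $I$. For forests $F,G$ on $I$, $F \leq G$ if there is a continuous map $F\to G$ which (D1) is increasing with respect to orientation towards the root, (D2) maps inner vertices to inner vertices injectively, (D3) is the identity of $I$ on leaves, (D4) is injective on each tree of $F$. This gives the poset $\operatorname{For}(I)$, whose minimum $\hat{0}$ is the forest without inner vertices. *)

theory Defs
  imports "HOL-Algebra.Lattice"
begin

text \<open>
  A (non-planar, leaf-labelled, rooted binary) forest on I is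
  encoded, up to isomorphism, by its set of clusters: each vertex other than a root
  is represented by the set of leaves below it. Leaves are the singletons {i},
  inner vertices are the non-singleton clusters; the maximal clusters are the leaf
  sets of the trees of the forest (their root half-edges are left implicit).
\<close>

definition laminar :: "'a set set \<Rightarrow> bool" where
  "laminar F \<longleftrightarrow> (\<forall>A\<in>F. \<forall>B\<in>F. A \<subseteq> B \<or> B \<subseteq> A \<or> A \<inter> B = {})"

text \<open>Every inner vertex has exactly two children (its two maximal proper subclusters,
  which partition it).\<close>
definition forest_on :: "'a set \<Rightarrow> 'a set set \<Rightarrow> bool" where
  "forest_on I F \<longleftrightarrow>
     F \<subseteq> Pow I \<and> {} \<notin> F \<and> (\<forall>i\<in>I. {i} \<in> F) \<and> laminar F \<and>
     (\<forall>C\<in>F. (\<forall>i. C \<noteq> {i}) \<longrightarrow> (\<exists>A\<in>F. \<exists>B\<in>F. A \<inter> B = {} \<and> A \<union> B = C))"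

definition tree_on :: "'a set \<Rightarrow> 'a set set \<Rightarrow> bool" where
  "tree_on I T \<longleftrightarrow> forest_on I T \<and> I \<in> T"

definition bot_forest :: "'a set \<Rightarrow> 'a set set" where
  "bot_forest I = (\<lambda>i. {i}) ` I"

definition inner :: "'a set set \<Rightarrow> 'a set set" where
  "inner F = {C \<in> F. \<forall>i. C \<noteq> {i}}"

definition has_parent :: "'a set set \<Rightarrow> 'a set \<Rightarrow> bool" where
  "has_parent F A \<longleftrightarrow> (\<exists>C\<in>F. A \<subset> C)"

definition parent :: "'a set set \<Rightarrow> 'a set \<Rightarrow> 'a set" where
  "parent F A = (THE C. C \<in> F \<and> A \<subset> C \<and> (\<forall>D\<in>F. A \<subset> D \<longrightarrow> C \<subseteq> D))"

text \<open>The edges of G (each edge of G is named by its lower endpoint D) traversed by the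
  image under phi of the edge of F from A to its parent.\<close>
definition edge_image ::
  "'a set set \<Rightarrow> 'a set set \<Rightarrow> ('a set \<Rightarrow> 'a set) \<Rightarrow> 'a set \<Rightarrow> 'a set set" where
  "edge_image F G \<phi> A = {D \<in> G. \<phi> A \<subseteq> D \<and> D \<subset> \<phi> (parent F A)}"

text \<open>F \<le> G: there is a map of forests (sending vertices to vertices and edges to
  upward paths) which is increasing (D1), maps inner vertices injectively to inner
  vertices (D2), is the identity on leaves (D3) and is injective on each tree of F (D4):
  distinct edges of the same tree of F are sent to paths with no common edge.\<close>
definition forest_le :: "'a set set \<Rightarrow> 'a set set \<Rightarrow> bool" where
  "forest_le F G \<longleftrightarrow> (\<exists>\<phi>.
     (\<forall>C\<in>F. \<phi> C \<in> G) \<and>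
     (\<forall>i. {i} \<in> F \<longrightarrow> \<phi> {i} = {i}) \<and>
     (\<forall>C\<in>inner F. \<phi> C \<in> inner G) \<and> inj_on \<phi> (inner F) \<and>
     (\<forall>A\<in>F. has_parent F A \<longrightarrow> \<phi> A \<subset> \<phi> (parent F A)) \<and>
     (\<forall>A\<in>F. \<forall>A'\<in>F. A \<noteq> A' \<and> has_parent F A \<and> has_parent F A' \<and>
        (\<exists>R\<in>F. A \<union> A' \<subseteq> R) \<longrightarrow> edge_image F G \<phi> A \<inter> edge_image F G \<phi> A' = {}))"

definition forest_interval :: "'a set \<Rightarrow> 'a set set \<Rightarrow> 'a set set gorder" where
  "forest_interval I T =
     \<lparr>carrier = {F. forest_on I F \<and> forest_le (bot_forest I) F \<and> forest_le F T},
      eq = (=), le = forest_le\<rparr>"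

end

(*
  A forest F below the tree T is determined by its roots: they partition I, and F consists of
  the nonempty intersections of the clusters of T with the blocks of that partition.  Conversely,
  restricting T to a partition gives a forest below T exactly when the partition is admissible:
  no vertex of T is the lowest common ancestor of two leaves of one block and also of two leaves
  of another block, which is what injectivity on inner vertices demands.  Under this
  correspondence the order of forests becomes refinement of the root partitions.  Admissible
  partitions include the one-block partition and are closed under common refinement, so the
  interval has a top and all nonempty meets, hence is a complete lattice.
*)

theory Submission
  imports Defs "HOL-Algebra.Complete_Lattice" "HOL-Library.Disjoint_Sets"
begin

section \<open>Clusters, parents and lowest common ancestors\<close>

lemma forest_onD:
  assumes "forest_on I F"
  shows "F \<subseteq> Pow I" "{} \<notin> F" "\<And>i. i \<in> I \<Longrightarrow> {i} \<in> F" "laminar F"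
    "\<And>C. C \<in> F \<Longrightarrow> (\<forall>i. C \<noteq> {i}) \<Longrightarrow> \<exists>A\<in>F. \<exists>B\<in>F. A \<inter> B = {} \<and> A \<union> B = C"
  using assms unfolding forest_on_def by blast+

lemma laminarD: "laminar F \<Longrightarrow> A \<in> F \<Longrightarrow> B \<in> F \<Longrightarrow> A \<subseteq> B \<or> B \<subseteq> A \<or> A \<inter> B = {}"
  unfolding laminar_def by blast

lemma not_singleton_if_distinct: "x \<in> X \<Longrightarrow> y \<in> X \<Longrightarrow> x \<noteq> y \<Longrightarrow> X \<subseteq> C \<Longrightarrow> \<forall>i. C \<noteq> {i}"
  by auto

lemma inner_two_elements:
  assumes "C \<in> inner F" "{} \<notin> F"
  obtains x y where "x \<in> C" "y \<in> C" "x \<noteq> y"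
proof -
  have "C \<noteq> {}"
    using assms unfolding inner_def by auto
  then obtain x where "x \<in> C"
    by (metis ex_in_conv)
  moreover have "C \<noteq> {x}"
    using assms(1) unfolding inner_def by blast
  ultimately show thesis
    using that by blast
qed

lemma finite_forest: "finite I \<Longrightarrow> forest_on I F \<Longrightarrow> finite F"
  using forest_onD(1) finite_Pow_iff rev_finite_subset by metis

lemma laminar_least_above:
  assumes "laminar F" "finite F" "S \<subseteq> F" "E\<^sub>0 \<in> S" "X \<noteq> {}" "\<And>E. E \<in> S \<Longrightarrow> X \<subseteq> E"
  obtains E where "E \<in> S" "\<And>E'. E' \<in> S \<Longrightarrow> E \<subseteq> E'"
proof -
  obtain E where E: "E \<in> S" and min: "\<And>E'. E' \<in> S \<Longrightarrow> E' \<subseteq> E \<Longrightarrow> E' = E"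
    using finite_has_minimal[OF rev_finite_subset[OF assms(2,3)]] assms(4) by blast
  have "E \<subseteq> E'" if E': "E' \<in> S" for E'
  proof -
    have "E \<inter> E' \<noteq> {}"
      using assms(5,6) E E' by blast
    then show ?thesis
      using laminarD[OF assms(1)] assms(3) E E' min[OF E'] by blast
  qed
  with E show thesis by (rule that)
qed

text \<open>If no cluster contains X, this is the junk value UNIV.\<close>
definition lca :: "'a set set \<Rightarrow> 'a set \<Rightarrow> 'a set" where
  "lca F X = \<Inter>{E\<in>F. X \<subseteq> E}"

lemma lca_eqI: "E \<in> F \<Longrightarrow> X \<subseteq> E \<Longrightarrow> (\<And>E'. E' \<in> F \<Longrightarrow> X \<subseteq> E' \<Longrightarrow> E \<subseteq> E') \<Longrightarrow> lca F X = E"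
  unfolding lca_def by blast

lemma lca_cluster: "C \<in> F \<Longrightarrow> lca F C = C"
  by (rule lca_eqI) auto

definition roots :: "'a set set \<Rightarrow> 'a set set" where
  "roots F = {R\<in>F. \<not> has_parent F R}"

context
  fixes I :: "'a set" and F :: "'a set set"
  assumes finite_I: "finite I" and forest: "forest_on I F"
begin

lemma
  assumes "X \<noteq> {}" "E \<in> F" "X \<subseteq> E"
  shows lca_in: "lca F X \<in> F" and subset_lca: "X \<subseteq> lca F X"
    and lca_least: "\<And>E'. E' \<in> F \<Longrightarrow> X \<subseteq> E' \<Longrightarrow> lca F X \<subseteq> E'"
proof -
  obtain L where L: "L \<in> {E\<in>F. X \<subseteq> E}" "\<And>E'. E' \<in> {E\<in>F. X \<subseteq> E} \<Longrightarrow> L \<subseteq> E'"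
    by (rule laminar_least_above[OF forest_onD(4)[OF forest] finite_forest[OF finite_I forest],
        of "{E\<in>F. X \<subseteq> E}" E X]) (use assms in auto)
  then have "lca F X = L"
    by (intro lca_eqI) auto
  with L show "lca F X \<in> F" "X \<subseteq> lca F X" "\<And>E'. E' \<in> F \<Longrightarrow> X \<subseteq> E' \<Longrightarrow> lca F X \<subseteq> E'"
    by auto
qed

lemma lca_eq_if_between:
  assumes "X \<noteq> {}" "X \<subseteq> Y" "Y \<subseteq> lca F X" "E \<in> F" "X \<subseteq> E"
  shows "lca F Y = lca F X"
proof (rule lca_eqI)
  show "lca F X \<in> F" "Y \<subseteq> lca F X"
    using lca_in[OF assms(1,4,5)] assms(3) .
  show "lca F X \<subseteq> E'" if "E' \<in> F" "Y \<subseteq> E'" for E'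
    using lca_least[OF assms(1,4,5) that(1)] assms(2) that(2) by blast
qed

lemma lca_in_inner:
  assumes "x \<in> X" "y \<in> X" "x \<noteq> y" "E \<in> F" "X \<subseteq> E"
  shows "lca F X \<in> inner F"
proof -
  have "X \<noteq> {}"
    using assms(1) by auto
  then have "lca F X \<in> F" "X \<subseteq> lca F X"
    using lca_in subset_lca assms(4,5) by auto
  moreover have "\<forall>i. lca F X \<noteq> {i}"
    by (rule not_singleton_if_distinct[OF assms(1-3) calculation(2)])
  ultimately show ?thesis
    unfolding inner_def by blast
qed

lemma
  assumes "A \<in> F" "has_parent F A"
  shows parent_in: "parent F A \<in> F" and psubset_parent: "A \<subset> parent F A"
    and parent_least: "\<And>D. D \<in> F \<Longrightarrow> A \<subset> D \<Longrightarrow> parent F A \<subseteq> D"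
proof -
  obtain D\<^sub>0 where D\<^sub>0: "D\<^sub>0 \<in> F" "A \<subset> D\<^sub>0"
    using assms(2) unfolding has_parent_def by blast
  have "A \<noteq> {}"
    using assms(1) forest_onD(2)[OF forest] by blast
  obtain P where P: "P \<in> {D\<in>F. A \<subset> D}" "\<And>D. D \<in> {D\<in>F. A \<subset> D} \<Longrightarrow> P \<subseteq> D"
    by (rule laminar_least_above[OF forest_onD(4)[OF forest] finite_forest[OF finite_I forest],
        of "{D\<in>F. A \<subset> D}" D\<^sub>0 A]) (use D\<^sub>0 \<open>A \<noteq> {}\<close> in auto)
  have "parent F A = P"
    unfolding parent_def by (rule the_equality) (use P in \<open>auto intro: subset_antisym\<close>)
  with P show "parent F A \<in> F" "A \<subset> parent F A" "\<And>D. D \<in> F \<Longrightarrow> A \<subset> D \<Longrightarrow> parent F A \<subseteq> D"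
    by auto
qed

lemma exists_root_above:
  assumes "C \<in> F"
  obtains R where "R \<in> F" "C \<subseteq> R" "\<not> has_parent F R"
proof -
  obtain R where R: "R \<in> {E\<in>F. C \<subseteq> E}"
    and max: "\<forall>E \<in> {E\<in>F. C \<subseteq> E}. R \<subseteq> E \<longrightarrow> R = E"
    using finite_has_maximal[of "{E\<in>F. C \<subseteq> E}"] finite_forest[OF finite_I forest] assms
    by auto
  have "\<not> has_parent F R"
    unfolding has_parent_def using R max by blast
  with R show thesis
    using that by blast
qed

lemma
  assumes "A \<in> F" "B \<in> F" "A \<inter> B = {}" "A \<union> B \<in> F"
  shows has_parent_child: "has_parent F A" and parent_child: "parent F A = A \<union> B"
proof -
  have "A \<noteq> {}" "B \<noteq> {}"
    using assms(1,2) forest_onD(2)[OF forest] by auto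
  then have "A \<subset> A \<union> B"
    using assms(3) by blast
  then show hp: "has_parent F A"
    unfolding has_parent_def using assms(4) by blast
  have "A \<subset> parent F A" "parent F A \<subseteq> A \<union> B"
    using psubset_parent[OF assms(1) hp] parent_least[OF assms(1) hp assms(4) \<open>A \<subset> A \<union> B\<close>] .
  moreover have "B \<subseteq> parent F A \<or> parent F A \<subseteq> B \<or> B \<inter> parent F A = {}"
    using laminarD[OF forest_onD(4)[OF forest] assms(2) parent_in[OF assms(1) hp]] .
  ultimately show "parent F A = A \<union> B"
    using assms(3) \<open>A \<noteq> {}\<close> by blast
qed

lemma child_eq_part:
  assumes A: "A \<in> F" "has_parent F A"
    and XY: "X \<in> F" "Y \<in> F" "X \<inter> Y = {}" "X \<union> Y = parent F A" and meet: "A \<inter> X \<noteq> {}"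
  shows "A = X"
proof -
  note lam = laminarD[OF forest_onD(4)[OF forest]] and P = psubset_parent[OF A] parent_least[OF A]
  have "X \<noteq> {}" "Y \<noteq> {}"
    using XY(1,2) forest_onD(2)[OF forest] by auto
  have "\<not> A \<subset> X"
  proof
    assume "A \<subset> X"
    then have "parent F A \<subseteq> X" using P(2) XY(1) by blast
    then show False using XY(3,4) \<open>Y \<noteq> {}\<close> by blast
  qed
  moreover have "\<not> X \<subset> A"
  proof
    assume "X \<subset> A"
    then have "A \<inter> Y \<noteq> {}" "\<not> A \<subseteq> Y" "\<not> Y \<subseteq> A"
      using P(1) XY(3,4) \<open>X \<noteq> {}\<close> by blast+
    then show False
      using lam[OF A(1) XY(2)] by blast
  qed
  ultimately show ?thesis
    using lam[OF A(1) XY(1)] meet by blast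
qed

lemma parent_eq_Un_sibling:
  assumes "A \<in> F" "has_parent F A"
  obtains B where "B \<in> F" "A \<inter> B = {}" "parent F A = A \<union> B"
proof -
  note P = parent_in[OF assms] psubset_parent[OF assms]
  have "A \<noteq> {}"
    using assms(1) forest_onD(2)[OF forest] by blast
  then have "\<forall>i. parent F A \<noteq> {i}"
    using P(2) by (metis psubsetE subset_singletonD)
  then obtain X Y where XY: "X \<in> F" "Y \<in> F" "X \<inter> Y = {}" "X \<union> Y = parent F A"
    using forest_onD(5)[OF forest P(1)] by blast
  have "A \<inter> X \<noteq> {} \<or> A \<inter> Y \<noteq> {}"
    using XY(4) P(2) \<open>A \<noteq> {}\<close> by blast
  then show thesis
  proof
    assume "A \<inter> X \<noteq> {}"
    then have "A = X" by (rule child_eq_part[OF assms XY])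
    then show thesis using that[of Y] XY by blast
  next
    assume "A \<inter> Y \<noteq> {}"
    then have "A = Y" using child_eq_part[OF assms XY(2,1)] XY by (simp add: Int_commute Un_commute)
    then show thesis using that[of X] XY by (simp add: Int_commute Un_commute)
  qed
qed

lemma lca_split:
  assumes "x \<in> X" "y \<in> X" "x \<noteq> y" "E \<in> F" "X \<subseteq> E"
  obtains A B where "A \<in> F" "B \<in> F" "A \<inter> B = {}" "A \<union> B = lca F X" "X \<inter> A \<noteq> {}" "X \<inter> B \<noteq> {}"
proof -
  have "X \<noteq> {}" using assms(1) by blast
  note lca = lca_in[OF this assms(4,5)] subset_lca[OF this assms(4,5)]
    lca_least[OF this assms(4,5)]
  have "\<forall>i. lca F X \<noteq> {i}"
    by (rule not_singleton_if_distinct[OF assms(1-3) lca(2)])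
  then obtain A B where AB: "A \<in> F" "B \<in> F" "A \<inter> B = {}" "A \<union> B = lca F X"
    using forest_onD(5)[OF forest lca(1)] by blast
  moreover have "A \<noteq> {}" "B \<noteq> {}"
    using AB forest_onD(2)[OF forest] by auto
  ultimately have "\<not> X \<subseteq> A" "\<not> X \<subseteq> B"
    using lca(3) AB(1,2,3,4) by blast+
  then have "X \<inter> A \<noteq> {}" "X \<inter> B \<noteq> {}"
    using lca(2) AB(4) by blast+
  with AB show thesis
    by (rule that)
qed

lemma ancestor_induct:
  assumes "A \<in> F" "C \<in> F" "A \<subseteq> C"
    and "P C"
    and "\<And>A. A \<in> F \<Longrightarrow> A \<subset> C \<Longrightarrow> has_parent F A \<Longrightarrow> parent F A \<subseteq> C \<Longrightarrow> P (parent F A) \<Longrightarrow> P A"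
  shows "P A"
  using assms(1,3)
proof (induction "card C - card A" arbitrary: A rule: less_induct)
  case less
  show ?case
  proof (cases "A = C")
    case True
    then show ?thesis using assms(4) by simp
  next
    case False
    then have "A \<subset> C" using less.prems by blast
    then have hp: "has_parent F A"
      unfolding has_parent_def using assms(2) by blast
    have pC: "parent F A \<subseteq> C"
      using parent_least[OF less.prems(1) hp assms(2)] \<open>A \<subset> C\<close> .
    have "finite C"
      using assms(2) forest_onD(1)[OF forest] finite_I by (meson PowD finite_subset subsetD)
    then have "card A < card (parent F A)" "card (parent F A) \<le> card C"
      using psubset_card_mono[OF finite_subset[OF pC] psubset_parent[OF less.prems(1) hp]]
        card_mono[OF _ pC] by auto
    then have "card C - card (parent F A) < card C - card A"
      by linarith
    then have "P (parent F A)"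
      using less.hyps parent_in[OF less.prems(1) hp] pC by blast
    then show ?thesis
      using assms(5) less.prems(1) \<open>A \<subset> C\<close> hp pC by blast
  qed
qed

lemma partition_on_roots: "partition_on I (roots F)"
proof (rule partition_onI)
  show "\<Union>(roots F) = I"
  proof
    show "\<Union>(roots F) \<subseteq> I"
      using forest_onD(1)[OF forest] unfolding roots_def by blast
    show "I \<subseteq> \<Union>(roots F)"
    proof
      fix i assume "i \<in> I"
      then obtain R where "R \<in> F" "{i} \<subseteq> R" "\<not> has_parent F R"
        using exists_root_above forest_onD(3)[OF forest] by metis
      then show "i \<in> \<Union>(roots F)"
        unfolding roots_def by blast
    qed
  qed
  show "disjnt R R'" if "R \<in> roots F" "R' \<in> roots F" "R \<noteq> R'" for R R'
    using that laminarD[OF forest_onD(4)[OF forest], of R R']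
    unfolding roots_def has_parent_def disjnt_def by blast
  show "{} \<notin> roots F"
    using forest_onD(2)[OF forest] unfolding roots_def by blast
qed

end

lemma bot_forest_le:
  assumes "forest_on I F"
  shows "forest_le (bot_forest I) F"
proof -
  have no_inner: "inner (bot_forest I) = {}"
    and no_parent: "\<And>A. A \<in> bot_forest I \<Longrightarrow> \<not> has_parent (bot_forest I) A"
    unfolding inner_def bot_forest_def has_parent_def by auto
  show ?thesis
    unfolding forest_le_def
  proof (intro exI[of _ id] conjI ballI allI impI)
    show "id C \<in> F" if "C \<in> bot_forest I" for C
      using that forest_onD(3)[OF assms] unfolding bot_forest_def by auto
  qed (use no_inner no_parent in auto)
qed

section \<open>Admissible partitions\<close>

lemma partition_on_block_eq:
  "partition_on A P \<Longrightarrow> J \<in> P \<Longrightarrow> J' \<in> P \<Longrightarrow> x \<in> J \<Longrightarrow> x \<in> J' \<Longrightarrow> J = J'"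
  using partition_onD2 disjointD by fastforce

definition admissible :: "'a set set \<Rightarrow> 'a set set \<Rightarrow> bool" where
  "admissible T P \<longleftrightarrow> (\<forall>J\<in>P. \<forall>J'\<in>P. \<forall>X\<subseteq>J. \<forall>X'\<subseteq>J'.
     (\<exists>x\<in>X. \<exists>y\<in>X. x \<noteq> y) \<longrightarrow> (\<exists>x\<in>X'. \<exists>y\<in>X'. x \<noteq> y) \<longrightarrow> lca T X = lca T X' \<longrightarrow> J = J')"

lemma admissibleD:
  "admissible T P \<Longrightarrow> J \<in> P \<Longrightarrow> J' \<in> P \<Longrightarrow> X \<subseteq> J \<Longrightarrow> X' \<subseteq> J' \<Longrightarrow>
    x \<in> X \<Longrightarrow> y \<in> X \<Longrightarrow> x \<noteq> y \<Longrightarrow> x' \<in> X' \<Longrightarrow> y' \<in> X' \<Longrightarrow> x' \<noteq> y' \<Longrightarrow>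
    lca T X = lca T X' \<Longrightarrow> J = J'"
  unfolding admissible_def by blast

definition tree_restriction :: "'a set set \<Rightarrow> 'a set set \<Rightarrow> 'a set set" where
  "tree_restriction T P = {E \<inter> J | E J. E \<in> T \<and> J \<in> P \<and> E \<inter> J \<noteq> {}}"

lemma tree_restrictionI: "E \<in> T \<Longrightarrow> J \<in> P \<Longrightarrow> E \<inter> J \<noteq> {} \<Longrightarrow> E \<inter> J \<in> tree_restriction T P"
  unfolding tree_restriction_def by blast

lemma tree_restrictionE:
  assumes "C \<in> tree_restriction T P"
  obtains E J where "E \<in> T" "J \<in> P" "C = E \<inter> J" "C \<noteq> {}"
  using assms unfolding tree_restriction_def by blast

lemma common_refinement_block_eq:
  assumes J: "J \<in> common_refinement \<P>" "J' \<in> common_refinement \<P>"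
    and partitions: "\<And>P. P \<in> \<P> \<Longrightarrow> partition_on A P"
    and common: "\<And>P. P \<in> \<P> \<Longrightarrow> \<exists>K\<in>P. J \<subseteq> K \<and> J' \<subseteq> K"
  shows "J = J'"
proof -
  obtain f g where f: "f \<in> (\<Pi> P\<in>\<P>. P)" "J = \<Inter>(f ` \<P>)" "J \<noteq> {}"
    and g: "g \<in> (\<Pi> P\<in>\<P>. P)" "J' = \<Inter>(g ` \<P>)" "J' \<noteq> {}"
    using J unfolding common_refinement by blast
  have "f P = g P" if P: "P \<in> \<P>" for P
  proof -
    obtain K where K: "K \<in> P" "J \<subseteq> K" "J' \<subseteq> K"
      using common[OF P] by blast
    have "J \<subseteq> f P" "J' \<subseteq> g P" "f P \<in> P" "g P \<in> P"
      using f g P by auto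
    then have "f P = K" "g P = K"
      using partition_on_block_eq[OF partitions[OF P]] K f(3) g(3) by (metis ex_in_conv subsetD)+
    then show ?thesis
      by simp
  qed
  then show ?thesis
    using f(2) g(2) by (metis image_cong)
qed

lemma admissible_common_refinement:
  assumes "\<And>P. P \<in> \<P> \<Longrightarrow> partition_on A P \<and> admissible T P"
  shows "admissible T (common_refinement \<P>)"
  unfolding admissible_def
proof (intro ballI allI impI)
  fix J J' X X'
  assume J: "J \<in> common_refinement \<P>" "J' \<in> common_refinement \<P>" and X: "X \<subseteq> J" "X' \<subseteq> J'"
    and "\<exists>x\<in>X. \<exists>y\<in>X. x \<noteq> y" "\<exists>x\<in>X'. \<exists>y\<in>X'. x \<noteq> y" and eq: "lca T X = lca T X'"
  then obtain x y x' y' where xy: "x \<in> X" "y \<in> X" "x \<noteq> y" "x' \<in> X'" "y' \<in> X'" "x' \<noteq> y'"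
    by blast
  have "\<exists>K\<in>P. J \<subseteq> K \<and> J' \<subseteq> K" if P: "P \<in> \<P>" for P
  proof -
    obtain K K' where K: "K \<in> P" "J \<subseteq> K" "K' \<in> P" "J' \<subseteq> K'"
      using common_refinement_exists[OF J(1) P] common_refinement_exists[OF J(2) P] by blast
    have "admissible T P"
      using assms P by blast
    then have "K = K'"
      using admissibleD[OF _ K(1) K(3) _ _ xy eq] X K(2,4) by blast
    with K show ?thesis
      by blast
  qed
  then show "J = J'"
    using common_refinement_block_eq[OF J] assms by blast
qed

section \<open>Maps of forests\<close>

locale forest_map =
  fixes I :: "'a set" and F G :: "'a set set" and \<phi> :: "'a set \<Rightarrow> 'a set"
  assumes finite_I: "finite I" and forest_F: "forest_on I F" and forest_G: "forest_on I G"
    and map_in: "C \<in> F \<Longrightarrow> \<phi> C \<in> G"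
    and map_leaf: "{i} \<in> F \<Longrightarrow> \<phi> {i} = {i}"
    and map_inner: "C \<in> inner F \<Longrightarrow> \<phi> C \<in> inner G"
    and inj_on_inner: "inj_on \<phi> (inner F)"
    and map_psubset_parent: "A \<in> F \<Longrightarrow> has_parent F A \<Longrightarrow> \<phi> A \<subset> \<phi> (parent F A)"
    and edge_images_disjoint: "A \<in> F \<Longrightarrow> A' \<in> F \<Longrightarrow> A \<noteq> A' \<Longrightarrow> has_parent F A \<Longrightarrow>
      has_parent F A' \<Longrightarrow> R \<in> F \<Longrightarrow> A \<union> A' \<subseteq> R \<Longrightarrow>
      edge_image F G \<phi> A \<inter> edge_image F G \<phi> A' = {}"

lemma forest_le_iff_forest_map:
  "finite I \<Longrightarrow> forest_on I F \<Longrightarrow> forest_on I G \<Longrightarrow> forest_le F G \<longleftrightarrow> (\<exists>\<phi>. forest_map I F G \<phi>)"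
  unfolding forest_le_def forest_map_def
  apply (intro iffI; elim exE)
  subgoal for \<phi> by (rule exI[of _ \<phi>]) (auto; blast)
  subgoal for \<phi> by (rule exI[of _ \<phi>]) (auto; blast)
  done

context forest_map
begin

lemma map_mono:
  assumes "A \<in> F" "C \<in> F" "A \<subseteq> C"
  shows "\<phi> A \<subseteq> \<phi> C"
  using assms
proof (rule ancestor_induct[OF finite_I forest_F, where P = "\<lambda>A. \<phi> A \<subseteq> \<phi> C"])
  fix A assume "A \<in> F" "has_parent F A" "\<phi> (parent F A) \<subseteq> \<phi> C"
  then show "\<phi> A \<subseteq> \<phi> C"
    using map_psubset_parent by blast
qed simp

lemma subset_map: "C \<in> F \<Longrightarrow> C \<subseteq> \<phi> C"
proof
  fix i assume "C \<in> F" "i \<in> C"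
  then have "{i} \<in> F"
    using forest_onD(1,3)[OF forest_F] by blast
  then have "\<phi> {i} \<subseteq> \<phi> C"
    using map_mono \<open>C \<in> F\<close> \<open>i \<in> C\<close> by blast
  then show "i \<in> \<phi> C"
    using map_leaf \<open>{i} \<in> F\<close> by simp
qed

lemma
  assumes "A \<in> F" "B \<in> F" "A \<inter> B = {}" "A \<union> B \<in> F"
  shows map_psubset_Un_sibling: "\<phi> A \<subset> \<phi> (A \<union> B)"
    and no_cluster_between_siblings: "D \<in> G \<Longrightarrow> \<phi> A \<subseteq> D \<Longrightarrow> \<phi> B \<subseteq> D \<Longrightarrow> \<not> D \<subset> \<phi> (A \<union> B)"
proof -
  have A: "has_parent F A" "parent F A = A \<union> B"
    using has_parent_child[OF finite_I forest_F assms] parent_child[OF finite_I forest_F assms] .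
  have B: "has_parent F B" "parent F B = A \<union> B"
    using has_parent_child[OF finite_I forest_F assms(2,1)] parent_child[OF finite_I forest_F assms(2,1)]
      assms(3,4) by (simp_all add: Int_commute Un_commute)
  show "\<phi> A \<subset> \<phi> (A \<union> B)"
    using map_psubset_parent[OF assms(1) A(1)] A(2) by simp
  assume D: "D \<in> G" "\<phi> A \<subseteq> D" "\<phi> B \<subseteq> D"
  have "A \<noteq> B"
    using assms(1,3) forest_onD(2)[OF forest_F] by auto
  then have disj: "edge_image F G \<phi> A \<inter> edge_image F G \<phi> B = {}"
    by (rule edge_images_disjoint[OF assms(1,2) _ A(1) B(1) assms(4) subset_refl])
  show "\<not> D \<subset> \<phi> (A \<union> B)"
  proof
    assume "D \<subset> \<phi> (A \<union> B)"
    then have "D \<in> edge_image F G \<phi> A" "D \<in> edge_image F G \<phi> B"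
      unfolding edge_image_def using D A(2) B(2) by simp_all
    with disj show False
      by blast
  qed
qed

lemma map_siblings_disjoint:
  assumes "A \<in> F" "B \<in> F" "A \<inter> B = {}" "A \<union> B \<in> F"
  shows "\<phi> A \<inter> \<phi> B = {}"
proof -
  have "\<phi> A \<subset> \<phi> (A \<union> B)" "\<phi> B \<subset> \<phi> (A \<union> B)"
    using map_psubset_Un_sibling[OF assms] map_psubset_Un_sibling[OF assms(2,1)] assms(3,4)
    by (simp_all add: Int_commute Un_commute)
  moreover have "\<not> \<phi> B \<subset> \<phi> (A \<union> B)" if "\<phi> A \<subseteq> \<phi> B"
    using no_cluster_between_siblings[OF assms map_in[OF assms(2)] that] by blast
  moreover have "\<not> \<phi> A \<subset> \<phi> (A \<union> B)" if "\<phi> B \<subseteq> \<phi> A"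
    using no_cluster_between_siblings[OF assms map_in[OF assms(1)] _ that] by blast
  ultimately show ?thesis
    using laminarD[OF forest_onD(4)[OF forest_G] map_in[OF assms(1)] map_in[OF assms(2)]] by blast
qed

lemma map_inter_parent:
  assumes "A \<in> F" "has_parent F A"
  shows "\<phi> A \<inter> parent F A = A"
proof -
  obtain B where B: "B \<in> F" "A \<inter> B = {}" "parent F A = A \<union> B"
    using parent_eq_Un_sibling[OF finite_I forest_F assms] .
  have "A \<union> B \<in> F"
    using parent_in[OF finite_I forest_F assms] B(3) by simp
  then have "\<phi> A \<inter> B = {}"
    using map_siblings_disjoint[OF assms(1) B(1,2)] subset_map[OF B(1)] by blast
  then show ?thesis
    using B(3) subset_map[OF assms(1)] by blast
qed

lemma map_inter_ancestor:
  assumes "A \<in> F" "C \<in> F" "A \<subseteq> C"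
  shows "\<phi> A \<inter> C = A"
  using assms
proof (rule ancestor_induct[OF finite_I forest_F, where P = "\<lambda>A. \<phi> A \<inter> C = A"])
  show "\<phi> C \<inter> C = C"
    using subset_map[OF assms(2)] by blast
next
  fix A assume A: "A \<in> F" "has_parent F A" "parent F A \<subseteq> C" "\<phi> (parent F A) \<inter> C = parent F A"
  have "\<phi> A \<inter> C \<subseteq> \<phi> A \<inter> parent F A"
    using map_psubset_parent[OF A(1,2)] A(4) by blast
  then show "\<phi> A \<inter> C = A"
    using map_inter_parent[OF A(1,2)] subset_map[OF A(1)] A(3) psubset_parent[OF finite_I forest_F A(1,2)]
    by blast
qed

lemma map_Un_siblings_below:
  assumes "A \<in> F" "B \<in> F" "A \<inter> B = {}" "A \<union> B \<in> F"
    and E: "E \<in> G" "E \<inter> A \<noteq> {}" "E \<inter> B \<noteq> {}"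
  shows "\<phi> (A \<union> B) \<subseteq> E"
proof -
  note lamG = laminarD[OF forest_onD(4)[OF forest_G]]
  have child_below: "\<phi> X \<subseteq> E" if "X \<in> F" "X \<subseteq> A \<union> B" "E \<inter> X \<noteq> {}" "E \<inter> (A \<union> B - X) \<noteq> {}" for X
  proof -
    have "\<phi> X \<inter> (A \<union> B) = X"
      using map_inter_ancestor[OF that(1) assms(4) that(2)] .
    then have "\<not> E \<subseteq> \<phi> X"
      using that(4) by blast
    moreover have "\<phi> X \<inter> E \<noteq> {}"
      using subset_map[OF that(1)] that(3) by blast
    ultimately show ?thesis
      using lamG[OF map_in[OF that(1)] E(1)] by blast
  qed
  have "\<phi> A \<subseteq> E" "\<phi> B \<subseteq> E"
    using child_below[OF assms(1)] child_below[OF assms(2)] E(2,3) assms(3) by blast+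
  then have "\<not> E \<subset> \<phi> (A \<union> B)"
    using no_cluster_between_siblings[OF assms(1-4) E(1)] by blast
  moreover have "\<phi> (A \<union> B) \<inter> E \<noteq> {}"
    using subset_map[OF assms(4)] E(2) by blast
  ultimately show ?thesis
    using lamG[OF map_in[OF assms(4)] E(1)] by blast
qed

lemma inter_cluster_in:
  assumes "J \<in> F" "E \<in> G" "E \<inter> J \<noteq> {}"
  shows "E \<inter> J \<in> F"
proof (cases "\<exists>x\<in>E \<inter> J. \<exists>y\<in>E \<inter> J. x \<noteq> y")
  case False
  then obtain x where "E \<inter> J = {x}"
    using assms(3) by blast
  moreover have "x \<in> I"
    using calculation assms(1) forest_onD(1)[OF forest_F] by blast
  ultimately show ?thesis
    using forest_onD(3)[OF forest_F] by simp
next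
  case True
  then obtain x y where xy: "x \<in> E \<inter> J" "y \<in> E \<inter> J" "x \<noteq> y"
    by blast
  let ?L = "lca F (E \<inter> J)"
  have L: "?L \<in> F" "E \<inter> J \<subseteq> ?L" "?L \<subseteq> J"
    using lca_in[OF finite_I forest_F _ assms(1)] subset_lca[OF finite_I forest_F _ assms(1)]
      lca_least[OF finite_I forest_F _ assms(1) _ assms(1)] assms(3) by auto
  obtain A B where AB: "A \<in> F" "B \<in> F" "A \<inter> B = {}" "A \<union> B = ?L"
    "(E \<inter> J) \<inter> A \<noteq> {}" "(E \<inter> J) \<inter> B \<noteq> {}"
    using lca_split[OF finite_I forest_F xy assms(1)] by blast
  then have "\<phi> ?L \<subseteq> E"
    using map_Un_siblings_below[OF AB(1-3) _ assms(2)] L(1) by auto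
  then have "?L \<subseteq> E \<inter> J"
    using subset_map[OF L(1)] L(3) by blast
  with L(2) show ?thesis
    using L(1) by (metis subset_antisym)
qed

lemma map_lca:
  assumes "x \<in> X" "y \<in> X" "x \<noteq> y" "K \<in> F" "X \<subseteq> K"
  shows "\<phi> (lca F X) = lca G X"
proof -
  have "X \<noteq> {}"
    using assms(1) by blast
  have LF: "lca F X \<in> F" "X \<subseteq> lca F X"
    using lca_in[OF finite_I forest_F \<open>X \<noteq> {}\<close> assms(4,5)]
      subset_lca[OF finite_I forest_F \<open>X \<noteq> {}\<close> assms(4,5)] .
  have "X \<subseteq> \<phi> (lca F X)"
    using LF(2) subset_map[OF LF(1)] by blast
  note LG = lca_in[OF finite_I forest_G \<open>X \<noteq> {}\<close> map_in[OF LF(1)] this]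
    subset_lca[OF finite_I forest_G \<open>X \<noteq> {}\<close> map_in[OF LF(1)] this]
    lca_least[OF finite_I forest_G \<open>X \<noteq> {}\<close> map_in[OF LF(1)] this map_in[OF LF(1)] this]
  obtain A B where AB: "A \<in> F" "B \<in> F" "A \<inter> B = {}" "A \<union> B = lca F X"
    "X \<inter> A \<noteq> {}" "X \<inter> B \<noteq> {}"
    using lca_split[OF finite_I forest_F assms] by blast
  have "lca G X \<inter> A \<noteq> {}" "lca G X \<inter> B \<noteq> {}"
    using AB(5,6) LG(2) by blast+
  then have "\<phi> (lca F X) \<subseteq> lca G X"
    using map_Un_siblings_below[OF AB(1-3) _ LG(1)] AB(4) LF(1) by auto
  with LG(3) show ?thesis
    by blast
qed


lemma admissible_roots: "admissible G (roots F)"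
  unfolding admissible_def
proof (intro ballI allI impI)
  fix J J' X X'
  assume J: "J \<in> roots F" "J' \<in> roots F" and X: "X \<subseteq> J" "X' \<subseteq> J'"
    and "\<exists>x\<in>X. \<exists>y\<in>X. x \<noteq> y" "\<exists>x\<in>X'. \<exists>y\<in>X'. x \<noteq> y" and eq: "lca G X = lca G X'"
  then obtain x y x' y' where xy: "x \<in> X" "y \<in> X" "x \<noteq> y" "x' \<in> X'" "y' \<in> X'" "x' \<noteq> y'"
    by blast
  have "J \<in> F" "J' \<in> F"
    using J unfolding roots_def by auto
  note inner = lca_in_inner[OF finite_I forest_F xy(1-3) \<open>J \<in> F\<close> X(1)]
    lca_in_inner[OF finite_I forest_F xy(4-6) \<open>J' \<in> F\<close> X(2)]
  have "lca F X = lca F X'"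
    using inj_onD[OF inj_on_inner _ inner] eq
      map_lca[OF xy(1-3) \<open>J \<in> F\<close> X(1)] map_lca[OF xy(4-6) \<open>J' \<in> F\<close> X(2)] by simp
  moreover have "lca F X \<subseteq> J" "lca F X' \<subseteq> J'" "X \<subseteq> lca F X"
    using lca_least[OF finite_I forest_F _ \<open>J \<in> F\<close> X(1) \<open>J \<in> F\<close> X(1)]
      lca_least[OF finite_I forest_F _ \<open>J' \<in> F\<close> X(2) \<open>J' \<in> F\<close> X(2)]
      subset_lca[OF finite_I forest_F _ \<open>J \<in> F\<close> X(1)] xy by blast+
  ultimately have "x \<in> J" "x \<in> J'"
    using xy(1) by blast+
  then show "J = J'"
    by (rule partition_on_block_eq[OF partition_on_roots[OF finite_I forest_F] J])
qed

lemma forest_eq_restriction: "F = tree_restriction G (roots F)"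
proof
  show "F \<subseteq> tree_restriction G (roots F)"
  proof
    fix C assume "C \<in> F"
    then obtain R where R: "R \<in> F" "C \<subseteq> R" "\<not> has_parent F R"
      using exists_root_above[OF finite_I forest_F] by blast
    have "\<phi> C \<inter> R = C" "C \<noteq> {}"
      using map_inter_ancestor[OF \<open>C \<in> F\<close> R(1,2)] \<open>C \<in> F\<close> forest_onD(2)[OF forest_F] by auto
    moreover have "R \<in> roots F"
      unfolding roots_def using R(1,3) by blast
    ultimately show "C \<in> tree_restriction G (roots F)"
      using tree_restrictionI[OF map_in[OF \<open>C \<in> F\<close>], of R "roots F"] by simp
  qed
  show "tree_restriction G (roots F) \<subseteq> F"
  proof
    fix C assume "C \<in> tree_restriction G (roots F)"
    then obtain E J where "E \<in> G" "J \<in> roots F" "C = E \<inter> J" "C \<noteq> {}"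
      by (rule tree_restrictionE)
    then show "C \<in> F"
      using inter_cluster_in[of J E] unfolding roots_def by blast
  qed
qed

lemma refines_roots: "refines I (roots F) (roots G)"
  unfolding refines_def
proof (intro conjI ballI partition_on_roots finite_I forest_F forest_G)
  fix J assume "J \<in> roots F"
  then have "J \<in> F"
    unfolding roots_def by blast
  then obtain R where "R \<in> G" "\<phi> J \<subseteq> R" "\<not> has_parent G R"
    using exists_root_above[OF finite_I forest_G map_in] by blast
  then show "\<exists>R\<in>roots G. J \<subseteq> R"
    unfolding roots_def using subset_map[OF \<open>J \<in> F\<close>] by blast
qed

end

section \<open>Forests below a tree\<close>

locale finite_tree =
  fixes I :: "'a set" and T :: "'a set set"
  assumes finite_I: "finite I" and tree: "tree_on I T"
begin

lemma forest_T: "forest_on I T" and root_in: "I \<in> T"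
  using tree unfolding tree_on_def by auto

lemma tree_restriction_subset: "C \<in> tree_restriction T P \<Longrightarrow> C \<subseteq> I"
  using forest_onD(1)[OF forest_T] by (auto elim: tree_restrictionE)

lemma
  assumes "X \<noteq> {}" "X \<subseteq> I"
  shows lca_T_in: "lca T X \<in> T" and subset_lca_T: "X \<subseteq> lca T X"
    and lca_T_least: "\<And>E. E \<in> T \<Longrightarrow> X \<subseteq> E \<Longrightarrow> lca T X \<subseteq> E"
  using lca_in subset_lca lca_least finite_I forest_T root_in assms by metis+

lemma block_in_tree_restriction: "partition_on I P \<Longrightarrow> J \<in> P \<Longrightarrow> J \<in> tree_restriction T P"
  using tree_restrictionI[OF root_in, of J P] partition_onD1 partition_onD3
  by (metis Int_absorb1 Union_upper)

lemma lca_inter_block: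
  assumes P: "partition_on I P" and C: "C \<in> tree_restriction T P" and J: "J \<in> P" "C \<subseteq> J"
  shows "lca T C \<inter> J = C"
proof -
  obtain E J' where EJ: "E \<in> T" "J' \<in> P" "C = E \<inter> J'" "C \<noteq> {}"
    using C by (rule tree_restrictionE)
  then have "J' = J"
    using partition_on_block_eq[OF P EJ(2) J(1)] J(2) by blast
  moreover have "lca T C \<subseteq> E" "C \<subseteq> lca T C"
    using lca_T_least[OF EJ(4) tree_restriction_subset[OF C] EJ(1)]
      subset_lca_T[OF EJ(4) tree_restriction_subset[OF C]] EJ(3) by auto
  ultimately show ?thesis
    using EJ(3) J(2) by blast
qed

lemma laminar_tree_restriction:
  assumes P: "partition_on I P"
  shows "laminar (tree_restriction T P)"
  unfolding laminar_def
proof (intro ballI)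
  fix A B assume "A \<in> tree_restriction T P" "B \<in> tree_restriction T P"
  then obtain E J E' J' where "E \<in> T" "J \<in> P" "A = E \<inter> J" "E' \<in> T" "J' \<in> P" "B = E' \<inter> J'"
    by (metis tree_restrictionE)
  then show "A \<subseteq> B \<or> B \<subseteq> A \<or> A \<inter> B = {}"
    using laminarD[OF forest_onD(4)[OF forest_T], of E E'] partition_on_block_eq[OF P, of J J'] by blast
qed

lemma tree_restriction_split:
  assumes P: "partition_on I P" and C: "C \<in> tree_restriction T P" "\<forall>i. C \<noteq> {i}"
  shows "\<exists>A\<in>tree_restriction T P. \<exists>B\<in>tree_restriction T P. A \<inter> B = {} \<and> A \<union> B = C"
proof -
  obtain E J where EJ: "E \<in> T" "J \<in> P" "C = E \<inter> J" "C \<noteq> {}"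
    using C(1) by (rule tree_restrictionE)
  then obtain x y where xy: "x \<in> C" "y \<in> C" "x \<noteq> y"
    using C(2) by blast
  obtain A B where AB: "A \<in> T" "B \<in> T" "A \<inter> B = {}" "A \<union> B = lca T C" "C \<inter> A \<noteq> {}" "C \<inter> B \<noteq> {}"
    using lca_split[OF finite_I forest_T xy root_in tree_restriction_subset[OF C(1)]] by blast
  have children: "A \<inter> J \<in> tree_restriction T P" "B \<inter> J \<in> tree_restriction T P"
    using tree_restrictionI[OF AB(1) EJ(2)] tree_restrictionI[OF AB(2) EJ(2)] AB(5,6) EJ(3) by blast+
  have "lca T C \<inter> J = C"
    using lca_inter_block[OF P C(1) EJ(2)] EJ(3) by blast
  then have "(A \<inter> J) \<union> (B \<inter> J) = C"
    using AB(4) by (metis Int_Un_distrib2)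
  moreover have "(A \<inter> J) \<inter> (B \<inter> J) = {}"
    using AB(3) by blast
  ultimately show ?thesis
    using children by blast
qed

lemma forest_on_tree_restriction:
  assumes P: "partition_on I P"
  shows "forest_on I (tree_restriction T P)"
  unfolding forest_on_def
proof (intro conjI ballI impI laminar_tree_restriction[OF P] tree_restriction_split[OF P])
  show "tree_restriction T P \<subseteq> Pow I" "{} \<notin> tree_restriction T P"
    using tree_restriction_subset by (auto elim: tree_restrictionE)
  show "{i} \<in> tree_restriction T P" if "i \<in> I" for i
  proof -
    obtain J where "J \<in> P" "i \<in> J"
      using partition_onD1[OF P] \<open>i \<in> I\<close> by blast
    then show ?thesis
      using tree_restrictionI[OF forest_onD(3)[OF forest_T \<open>i \<in> I\<close>], of J P] by auto
  qed
qed

lemma roots_tree_restriction: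
  assumes P: "partition_on I P"
  shows "roots (tree_restriction T P) = P"
proof -
  have below_block: "\<exists>J\<in>P. C \<subseteq> J" if C: "C \<in> tree_restriction T P" for C
  proof -
    obtain E J where "E \<in> T" "J \<in> P" "C = E \<inter> J" "C \<noteq> {}"
      using C by (rule tree_restrictionE)
    then show ?thesis by blast
  qed
  have "\<not> has_parent (tree_restriction T P) J" if J: "J \<in> P" for J
  proof
    assume "has_parent (tree_restriction T P) J"
    then obtain D where D: "D \<in> tree_restriction T P" "J \<subset> D"
      unfolding has_parent_def by blast
    then obtain J' where J': "J' \<in> P" "D \<subseteq> J'"
      using below_block by blast
    obtain x where "x \<in> J"
      using partition_onD3[OF P] J by (metis ex_in_conv)
    then have "J' = J"
      using partition_on_block_eq[OF P J'(1) J, of x] D(2) J'(2) by blast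
    then show False
      using D(2) J'(2) by blast
  qed
  moreover have "C \<in> P" if C: "C \<in> tree_restriction T P" "\<not> has_parent (tree_restriction T P) C" for C
  proof -
    obtain J where "J \<in> P" "C \<subseteq> J"
      using below_block[OF C(1)] by blast
    then show ?thesis
      using C(2) block_in_tree_restriction[OF P] unfolding has_parent_def by blast
  qed
  ultimately show ?thesis
    unfolding roots_def using block_in_tree_restriction[OF P] by blast
qed

lemma tree_restriction_root: "tree_restriction T {I} = T"
proof
  show "tree_restriction T {I} \<subseteq> T"
    using forest_onD(1)[OF forest_T] by (auto elim!: tree_restrictionE simp: Int_absorb2)
  show "T \<subseteq> tree_restriction T {I}"
  proof
    fix E assume "E \<in> T"
    then have "E \<inter> I = E" "E \<noteq> {}"
      using forest_onD(1,2)[OF forest_T] by auto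
    then show "E \<in> tree_restriction T {I}"
      using tree_restrictionI[OF \<open>E \<in> T\<close>, of I "{I}"] by simp
  qed
qed

lemma lca_tree_restriction:
  assumes Q: "partition_on I Q" and K: "K \<in> Q" and X: "X \<noteq> {}" "X \<subseteq> K"
  shows "lca (tree_restriction T Q) X = lca T X \<inter> K"
proof (rule lca_eqI)
  have "X \<subseteq> I"
    using X(2) K partition_onD1[OF Q] by blast
  note lca = lca_T_in[OF X(1) this] subset_lca_T[OF X(1) this] lca_T_least[OF X(1) this]
  show "lca T X \<inter> K \<in> tree_restriction T Q" "X \<subseteq> lca T X \<inter> K"
    using tree_restrictionI[OF lca(1) K] lca(2) X by blast+
  show "lca T X \<inter> K \<subseteq> D" if D: "D \<in> tree_restriction T Q" "X \<subseteq> D" for D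
  proof -
    obtain E K' where EK: "E \<in> T" "K' \<in> Q" "D = E \<inter> K'" "D \<noteq> {}"
      using D(1) by (rule tree_restrictionE)
    obtain x where "x \<in> X"
      using X(1) by blast
    then have "K' = K"
      using partition_on_block_eq[OF Q EK(2) K, of x] X(2) D(2) EK(3) by blast
    then show ?thesis
      using lca(3)[OF EK(1)] D(2) EK(3) by blast
  qed
qed

end

text \<open>A refinement P of Q is realised by the map sending each cluster of the restriction to P to
  the smallest cluster of the restriction to Q containing it.\<close>
locale admissible_refinement = finite_tree +
  fixes P Q :: "'a set set"
  assumes partition_P: "partition_on I P" and admissible_P: "admissible T P"
    and refines_P_Q: "refines I P Q"
begin

abbreviation "F \<equiv> tree_restriction T P"
abbreviation "G \<equiv> tree_restriction T Q"

lemma partition_Q: "partition_on I Q"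
  using refines_P_Q unfolding refines_def by blast

lemma forest_F: "forest_on I F" and forest_G: "forest_on I G"
  using forest_on_tree_restriction partition_P partition_Q by auto

lemma block_above:
  assumes "C \<in> F"
  obtains J where "J \<in> P" "C \<subseteq> J"
  using assms by (metis tree_restrictionE inf_le2)

lemma subset_block: "C \<in> F \<Longrightarrow> J \<in> P \<Longrightarrow> x \<in> C \<Longrightarrow> x \<in> J \<Longrightarrow> C \<subseteq> J"
  using partition_on_block_eq[OF partition_P] by (metis block_above subsetD)

lemma
  assumes "C \<in> F" "J \<in> P" "C \<subseteq> J"
  shows lca_G_in: "lca G C \<in> G" and subset_lca_G: "C \<subseteq> lca G C"
    and lca_G_least: "\<And>D. D \<in> G \<Longrightarrow> C \<subseteq> D \<Longrightarrow> lca G C \<subseteq> D"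
    and lca_G_inter_block: "lca G C \<inter> J = C"
proof -
  obtain K where K: "K \<in> Q" "J \<subseteq> K"
    using refines_P_Q assms(2) unfolding refines_def by blast
  have "C \<noteq> {}"
    using assms(1) by (auto elim: tree_restrictionE)
  have "C \<subseteq> K"
    using assms(3) K(2) by blast
  have "K \<in> G"
    using block_in_tree_restriction[OF partition_Q K(1)] .
  show "lca G C \<in> G" "C \<subseteq> lca G C" "\<And>D. D \<in> G \<Longrightarrow> C \<subseteq> D \<Longrightarrow> lca G C \<subseteq> D"
    using lca_in[OF finite_I forest_G \<open>C \<noteq> {}\<close> \<open>K \<in> G\<close> \<open>C \<subseteq> K\<close>]
      subset_lca[OF finite_I forest_G \<open>C \<noteq> {}\<close> \<open>K \<in> G\<close> \<open>C \<subseteq> K\<close>]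
      lca_least[OF finite_I forest_G \<open>C \<noteq> {}\<close> \<open>K \<in> G\<close> \<open>C \<subseteq> K\<close>] .
  have "lca G C = lca T C \<inter> K"
    using lca_tree_restriction[OF partition_Q K(1) \<open>C \<noteq> {}\<close> \<open>C \<subseteq> K\<close>] .
  then show "lca G C \<inter> J = C"
    using lca_inter_block[OF partition_P assms] K(2) by blast
qed

lemma lca_T_lca_G:
  assumes "C \<in> F" "J \<in> P" "C \<subseteq> J"
  shows "lca T (lca G C) = lca T C"
proof -
  obtain K where K: "K \<in> Q" "J \<subseteq> K"
    using refines_P_Q assms(2) unfolding refines_def by blast
  have "C \<noteq> {}"
    using assms(1) by (auto elim: tree_restrictionE)
  have "C \<subseteq> K"
    using assms(3) K(2) by blast
  have "lca G C \<subseteq> lca T C"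
    using lca_tree_restriction[OF partition_Q K(1) \<open>C \<noteq> {}\<close> \<open>C \<subseteq> K\<close>] by blast
  with subset_lca_G[OF assms] show ?thesis
    by (rule lca_eq_if_between[OF finite_I forest_T \<open>C \<noteq> {}\<close> _ _ root_in
          tree_restriction_subset[OF assms(1)]])
qed

lemma inj_on_lca_G: "inj_on (lca G) (inner F)"
proof (rule inj_onI)
  fix C C' assume C: "C \<in> inner F" and C': "C' \<in> inner F" and eq: "lca G C = lca G C'"
  have "C \<in> F" "C' \<in> F"
    using C C' unfolding inner_def by auto
  obtain J J' where J: "J \<in> P" "C \<subseteq> J" and J': "J' \<in> P" "C' \<subseteq> J'"
    using block_above[OF \<open>C \<in> F\<close>] block_above[OF \<open>C' \<in> F\<close>] by metis
  obtain x y where "x \<in> C" "y \<in> C" "x \<noteq> y"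
    using inner_two_elements[OF C forest_onD(2)[OF forest_F]] .
  moreover obtain x' y' where "x' \<in> C'" "y' \<in> C'" "x' \<noteq> y'"
    using inner_two_elements[OF C' forest_onD(2)[OF forest_F]] .
  moreover have "lca T C = lca T C'"
    using lca_T_lca_G[OF \<open>C \<in> F\<close> J] lca_T_lca_G[OF \<open>C' \<in> F\<close> J'] eq by simp
  ultimately have "J = J'"
    by (rule admissibleD[OF admissible_P J(1) J'(1) J(2) J'(2)])
  have "C = lca G C \<inter> J"
    using lca_G_inter_block[OF \<open>C \<in> F\<close> J] by simp
  also have "\<dots> = lca G C' \<inter> J'"
    using eq \<open>J = J'\<close> by simp
  also have "\<dots> = C'"
    by (rule lca_G_inter_block[OF \<open>C' \<in> F\<close> J'])
  finally show "C = C'" .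
qed

lemma lca_G_psubset_parent:
  assumes A: "A \<in> F" "has_parent F A"
  shows "lca G A \<subset> lca G (parent F A)"
proof -
  note parent = parent_in[OF finite_I forest_F A] psubset_parent[OF finite_I forest_F A]
  obtain J where J: "J \<in> P" "parent F A \<subseteq> J"
    using block_above[OF parent(1)] by blast
  then have "A \<subseteq> J"
    using parent(2) by blast
  have "lca G A \<subseteq> lca G (parent F A)"
    using lca_G_least[OF A(1) J(1) \<open>A \<subseteq> J\<close> lca_G_in[OF parent(1) J]]
      subset_lca_G[OF parent(1) J] parent(2) by blast
  moreover have "lca G A \<noteq> lca G (parent F A)"
    using lca_G_inter_block[OF A(1) J(1) \<open>A \<subseteq> J\<close>] lca_G_inter_block[OF parent(1) J] parent(2)
    by auto
  ultimately show ?thesis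
    by blast
qed

lemma inter_block_in_F:
  assumes D: "D \<in> G" and J: "J \<in> P" and x: "x \<in> D" "x \<in> J"
  shows "D \<inter> J \<in> F"
proof -
  obtain E K where EK: "E \<in> T" "K \<in> Q" "D = E \<inter> K" "D \<noteq> {}"
    using D by (rule tree_restrictionE)
  obtain K' where K': "K' \<in> Q" "J \<subseteq> K'"
    using refines_P_Q J unfolding refines_def by blast
  have "K = K'"
    using partition_on_block_eq[OF partition_Q EK(2) K'(1), of x] x EK(3) K'(2) by blast
  with EK(3) K'(2) have "D \<inter> J = E \<inter> J"
    by blast
  moreover have "E \<inter> J \<noteq> {}"
    using x EK(3) by blast
  ultimately show ?thesis
    using tree_restrictionI[OF EK(1) J] by simp
qed

lemma edge_image_inter_block:
  assumes B: "B \<in> F" "has_parent F B" and J: "J \<in> P" "B \<subseteq> J"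
    and D: "D \<in> edge_image F G (lca G) B"
  shows "D \<inter> J = B"
proof -
  note parent = parent_in[OF finite_I forest_F B] psubset_parent[OF finite_I forest_F B]
    parent_least[OF finite_I forest_F B]
  have D': "D \<in> G" "lca G B \<subseteq> D" "D \<subset> lca G (parent F B)"
    using D unfolding edge_image_def by auto
  obtain x where "x \<in> B"
    using B(1) forest_onD(2)[OF forest_F] by (metis ex_in_conv)
  then have pJ: "parent F B \<subseteq> J"
    using subset_block[OF parent(1) J(1)] parent(2) J(2) by blast
  have "B \<subseteq> D"
    using subset_lca_G[OF B(1) J] D'(2) by blast
  then have "D \<inter> J \<in> F"
    using inter_block_in_F[OF D'(1) J(1)] \<open>x \<in> B\<close> J(2) by blast
  have "\<not> B \<subset> D \<inter> J"
  proof
    assume "B \<subset> D \<inter> J"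
    then have "parent F B \<subseteq> D"
      using parent(3)[OF \<open>D \<inter> J \<in> F\<close>] by blast
    then show False
      using lca_G_least[OF parent(1) J(1) pJ D'(1)] D'(3) by blast
  qed
  then show ?thesis
    using \<open>B \<subseteq> D\<close> J(2) by blast
qed

lemma lca_G_in_inner:
  assumes C: "C \<in> inner F"
  shows "lca G C \<in> inner G"
proof -
  have "C \<in> F"
    using C unfolding inner_def by blast
  then obtain J where "J \<in> P" "C \<subseteq> J"
    by (rule block_above)
  then obtain K where "K \<in> Q" "C \<subseteq> K"
    using refines_P_Q unfolding refines_def by blast
  obtain x y where "x \<in> C" "y \<in> C" "x \<noteq> y"
    using inner_two_elements[OF C forest_onD(2)[OF forest_F]] .
  then show ?thesis
    using lca_in_inner[OF finite_I forest_G _ _ _ block_in_tree_restriction[OF partition_Q \<open>K \<in> Q\<close>]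
        \<open>C \<subseteq> K\<close>] by blast
qed

lemma edge_images_lca_G_disjoint:
  assumes A: "A \<in> F" "A' \<in> F" "A \<noteq> A'" "has_parent F A" "has_parent F A'"
    and R: "R \<in> F" "A \<union> A' \<subseteq> R"
  shows "edge_image F G (lca G) A \<inter> edge_image F G (lca G) A' = {}"
proof -
  obtain J where J: "J \<in> P" "R \<subseteq> J"
    using block_above[OF R(1)] .
  have "D \<inter> J = A" "D \<inter> J = A'"
    if "D \<in> edge_image F G (lca G) A" "D \<in> edge_image F G (lca G) A'" for D
    using edge_image_inter_block[OF A(1,4) J(1) _ that(1)] edge_image_inter_block[OF A(2,5) J(1) _ that(2)]
      J(2) R(2) by auto
  then show ?thesis
    using A(3) by blast
qed

lemma forest_map_lca_G: "forest_map I F G (lca G)"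
proof
  show "finite I" "forest_on I F" "forest_on I G"
    using finite_I forest_F forest_G .
  show "lca G C \<in> G" if C: "C \<in> F" for C
  proof -
    obtain J where "J \<in> P" "C \<subseteq> J"
      using block_above[OF C] .
    then show ?thesis
      by (rule lca_G_in[OF C])
  qed
  show "lca G {i} = {i}" if "{i} \<in> F" for i
  proof -
    have "i \<in> I"
      using tree_restriction_subset[OF that] by blast
    then show ?thesis
      using lca_cluster forest_onD(3)[OF forest_G] by blast
  qed
qed (use lca_G_in_inner inj_on_lca_G lca_G_psubset_parent edge_images_lca_G_disjoint in auto)

end

section \<open>The interval as a lattice of partitions\<close>

lemma forest_interval_eq_le [simp]:
  "eq (forest_interval I T) = (=)" "le (forest_interval I T) = forest_le"
  unfolding forest_interval_def by simp_all

context finite_tree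
begin

lemma refines_root: "partition_on I P \<Longrightarrow> refines I P {I}"
  unfolding refines_def using partition_on_space root_in forest_onD(2)[OF forest_T]
  by (metis Union_upper partition_onD1 singletonI)

lemma forest_le_tree_restriction:
  assumes "partition_on I P" "admissible T P" "refines I P Q"
  shows "forest_le (tree_restriction T P) (tree_restriction T Q)"
proof -
  interpret admissible_refinement I T P Q
    using assms by unfold_locales
  show ?thesis
    using forest_le_iff_forest_map[OF finite_I forest_F forest_G] forest_map_lca_G by blast
qed

lemma tree_restriction_in_interval:
  assumes "partition_on I P" "admissible T P"
  shows "tree_restriction T P \<in> carrier (forest_interval I T)"
proof -
  have "forest_le (tree_restriction T P) T"
    using forest_le_tree_restriction[OF assms refines_root[OF assms(1)]] tree_restriction_root by simp
  then show ?thesis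
    unfolding forest_interval_def
    using forest_on_tree_restriction[OF assms(1)] bot_forest_le by auto
qed

lemma
  assumes "F \<in> carrier (forest_interval I T)"
  shows interval_forest_on: "forest_on I F"
    and interval_partition_on_roots: "partition_on I (roots F)"
    and interval_admissible_roots: "admissible T (roots F)"
    and interval_tree_restriction_roots: "tree_restriction T (roots F) = F"
proof -
  show "forest_on I F"
    using assms unfolding forest_interval_def by simp
  moreover have "forest_le F T"
    using assms unfolding forest_interval_def by simp
  ultimately obtain \<phi> where "forest_map I F T \<phi>"
    using forest_le_iff_forest_map[OF finite_I _ forest_T] by blast
  then interpret forest_map I F T \<phi> .
  show "partition_on I (roots F)" "admissible T (roots F)" "tree_restriction T (roots F) = F"
    using partition_on_roots[OF finite_I forest_F] admissible_roots forest_eq_restriction by simp_all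
qed

lemma forest_le_iff_refines:
  assumes F: "F \<in> carrier (forest_interval I T)" and G: "G \<in> carrier (forest_interval I T)"
  shows "forest_le F G \<longleftrightarrow> refines I (roots F) (roots G)"
proof
  assume "forest_le F G"
  then obtain \<phi> where "forest_map I F G \<phi>"
    using forest_le_iff_forest_map[OF finite_I interval_forest_on[OF F] interval_forest_on[OF G]] by blast
  then show "refines I (roots F) (roots G)"
    by (rule forest_map.refines_roots)
next
  assume "refines I (roots F) (roots G)"
  then have "forest_le (tree_restriction T (roots F)) (tree_restriction T (roots G))"
    by (rule forest_le_tree_restriction[OF interval_partition_on_roots[OF F] interval_admissible_roots[OF F]])
  then show "forest_le F G"
    unfolding interval_tree_restriction_roots[OF F] interval_tree_restriction_roots[OF G] .
qed

lemma partial_order_interval: "partial_order (forest_interval I T)"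
proof -
  note le_iff = forest_le_iff_refines and partition = interval_partition_on_roots
  show ?thesis
  proof (unfold_locales, simp_all)
    show "forest_le F F" if "F \<in> carrier (forest_interval I T)" for F
      using le_iff[OF that that] refines_refl[OF partition[OF that]] by blast
    show "F = G" if "forest_le F G" "forest_le G F"
      and F: "F \<in> carrier (forest_interval I T)" and G: "G \<in> carrier (forest_interval I T)" for F G
    proof -
      have "refines I (roots F) (roots G)" "refines I (roots G) (roots F)"
        using le_iff[OF F G] le_iff[OF G F] that(1,2) by simp_all
      then have "roots F = roots G"
        by (rule refines_asym)
      then have "tree_restriction T (roots F) = tree_restriction T (roots G)"
        by (rule arg_cong)
      then show ?thesis
        unfolding interval_tree_restriction_roots[OF F] interval_tree_restriction_roots[OF G] .
    qed
    show "forest_le F H" if "forest_le F G" "forest_le G H" and F: "F \<in> carrier (forest_interval I T)"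
      and G: "G \<in> carrier (forest_interval I T)" and H: "H \<in> carrier (forest_interval I T)" for F G H
    proof -
      have "refines I (roots F) (roots G)" "refines I (roots G) (roots H)"
        using le_iff[OF F G] le_iff[OF G H] that(1,2) by simp_all
      then show ?thesis
        using le_iff[OF F H] refines_trans by blast
    qed
  qed
qed

lemma greatest_interval: "greatest (forest_interval I T) T (carrier (forest_interval I T))"
proof -
  have "partition_on I {I}"
    using partition_on_space root_in forest_onD(2)[OF forest_T] by metis
  moreover have "admissible T {I}"
    unfolding admissible_def by blast
  ultimately have "T \<in> carrier (forest_interval I T)"
    using tree_restriction_in_interval tree_restriction_root by metis
  then show ?thesis
    unfolding greatest_def by (auto simp: forest_interval_def)
qed

lemma greatest_Lower_interval:
  assumes A: "A \<subseteq> carrier (forest_interval I T)" "A \<noteq> {}"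
  shows "greatest (forest_interval I T) (tree_restriction T (common_refinement (roots ` A)))
    (Lower (forest_interval I T) A)"
proof -
  let ?M = "common_refinement (roots ` A)"
  note le_iff = forest_le_iff_refines
  have partitions: "\<And>P. P \<in> roots ` A \<Longrightarrow> partition_on I P"
    using interval_partition_on_roots A(1) by blast
  have "partition_on I ?M"
    using partition_on_common_refinement[OF partitions] A(2) by blast
  moreover have "admissible T ?M"
    by (rule admissible_common_refinement[of _ I])
      (use partitions interval_admissible_roots A(1) in blast)
  ultimately have M: "partition_on I ?M" "admissible T ?M" .
  note M_in = tree_restriction_in_interval[OF M] and M_roots = roots_tree_restriction[OF M(1)]
  show ?thesis
  proof (rule greatest_LowerI)
    show "tree_restriction T ?M \<sqsubseteq>\<^bsub>forest_interval I T\<^esub> F" if F: "F \<in> A" for F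
    proof -
      have "refines I ?M (roots F)"
        using refines_common_refinement[OF partitions] F by blast
      then show ?thesis
        using le_iff[OF M_in, of F] F A(1) M_roots by auto
    qed
    show "F \<sqsubseteq>\<^bsub>forest_interval I T\<^esub> tree_restriction T ?M" if F: "F \<in> Lower (forest_interval I T) A" for F
    proof -
      have F_in: "F \<in> carrier (forest_interval I T)"
        using F unfolding Lower_def by blast
      have "refines I (roots F) P" if "P \<in> roots ` A" for P
        using F that A(1) le_iff[OF F_in] unfolding Lower_def by auto
      then have "refines I (roots F) ?M"
        using common_refinement_coarsest[OF partitions interval_partition_on_roots[OF F_in]] A(2) by blast
      then show ?thesis
        using le_iff[OF F_in M_in] M_roots by simp
    qed
  qed (use A(1) M_in in auto)
qed

lemma complete_lattice_interval: "complete_lattice (forest_interval I T)"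
proof -
  interpret partial_order "forest_interval I T"
    by (rule partial_order_interval)
  show ?thesis
    using greatest_interval greatest_Lower_interval by (intro complete_lattice_criterion1) blast+
qed

end

theorem theorem3p5:
  fixes I :: "'a set" and T :: "'a set set"
  assumes "finite I" and "tree_on I T"
  shows "lattice (forest_interval I T)"
proof -
  interpret finite_tree I T
    using assms by unfold_locales
  show ?thesis
    using complete_lattice_interval by (rule complete_lattice_lattice)
qed

end
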